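(* Let $n\ge 1$ and let $\mathcal{S}_n$ be the Shi arrangement in $\mathbb{R}^n$, consisting of the hyperplanes $x_i - x_j = 0$ and $x_i - x_j = 1$ for all $1 \leq i < j \leq n$. The map $\sigma_n$ (defined below) is a bijection between the set of regions of $\mathcal{S}_n$ and the set of parking functions on $[n]$.
   Context: A region of an arrangement is a connected component of the complement of the union of its hyperplanes. A parking function on $[n]=\{1,\ldots,n\}$ is a map $f:[n]\to[n]$ such that for every $1\le j\le n$ the set $f^{-1}(\{1,\ldots,j\})$ has at least $j$ elements. The diagram of a region $R$ of $\mathcal{S}_n$ is defined as follows. Let $w=w_1w_2\cdots w_n$ be the unique permutation of $[n]$ such that $x_{w_1}>x_{w_2}>\cdots>x_{w_n}$ holds on $R$; the position of $m\in[n]$ is the index $p$ with $w_p=m$. For each pair $i<j$ such that $x_i-x_j>1$ holds on $R$, draw an arc from $i$ to $j$ (it goes rightwards in $w$). Then remove every arc that contains another arc: an arc $(i,l)$ is removed if there is a different arc $(j,k)$ with $i$ weakly to the left of $j$ and $k$ weakly to the left of $l$ in $w$. The remaining arcs partition $[n]$ into chains (the connected components under the remaining arcs), each consisting of increasing integers. The map $\sigma_n$ sends $R$ to the function $f:[n]\to[n]$ where $f(i)$ is the position in $w$ of the leftmost element of the chain containing $i$. *)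

theory Defs
  imports "HOL-Analysis.Analysis"
begin

text \<open>Points of R^n are modelled as functions nat => real that vanish outside {1..n};
  the topology is the product topology on nat => real (Function_Topology), whose
  restriction to this n-dimensional subspace is the Euclidean topology.\<close>

definition shi_complement :: "nat \<Rightarrow> (nat \<Rightarrow> real) set" where
  "shi_complement n = {x. (\<forall>i. i \<notin> {1..n} \<longrightarrow> x i = 0) \<and>
     (\<forall>i j. 1 \<le> i \<longrightarrow> i < j \<longrightarrow> j \<le> n \<longrightarrow> x i - x j \<noteq> 0 \<and> x i - x j \<noteq> 1)}"

definition shi_regions :: "nat \<Rightarrow> (nat \<Rightarrow> real) set set" where
  "shi_regions n = {connected_component_set (shi_complement n) x | x. x \<in> shi_complement n}"

definition parking_functions :: "nat \<Rightarrow> (nat \<Rightarrow> nat) set" where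
  "parking_functions n = {f \<in> {1..n} \<rightarrow>\<^sub>E {1..n}.
     \<forall>j\<in>{1..n}. j \<le> card {i \<in> {1..n}. f i \<le> j}}"

text \<open>Position of m in the word w determined by the point x (x_{w_1} > ... > x_{w_n}).\<close>
definition shi_pos :: "nat \<Rightarrow> (nat \<Rightarrow> real) \<Rightarrow> nat \<Rightarrow> nat" where
  "shi_pos n x m = card {k \<in> {1..n}. x k > x m} + 1"

definition shi_arc :: "nat \<Rightarrow> (nat \<Rightarrow> real) \<Rightarrow> nat \<Rightarrow> nat \<Rightarrow> bool" where
  "shi_arc n x i j \<longleftrightarrow> 1 \<le> i \<and> i < j \<and> j \<le> n \<and> x i - x j > 1"

definition shi_min_arc :: "nat \<Rightarrow> (nat \<Rightarrow> real) \<Rightarrow> nat \<Rightarrow> nat \<Rightarrow> bool" where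
  "shi_min_arc n x i l \<longleftrightarrow> shi_arc n x i l \<and>
     \<not> (\<exists>j k. shi_arc n x j k \<and> (j, k) \<noteq> (i, l) \<and>
            shi_pos n x i \<le> shi_pos n x j \<and> shi_pos n x k \<le> shi_pos n x l)"

definition shi_same_chain :: "nat \<Rightarrow> (nat \<Rightarrow> real) \<Rightarrow> nat \<Rightarrow> nat \<Rightarrow> bool" where
  "shi_same_chain n x i j \<longleftrightarrow>
     (i, j) \<in> ({(a, b). shi_min_arc n x a b} \<union> {(a, b). shi_min_arc n x b a})\<^sup>*"

text \<open>The map sigma_n; all data used is constant on a region, so any point of R may be used.\<close>
definition shi_sigma :: "nat \<Rightarrow> (nat \<Rightarrow> real) set \<Rightarrow> (nat \<Rightarrow> nat)" where
  "shi_sigma n R = (let x = (SOME x. x \<in> R) in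
     (\<lambda>i\<in>{1..n}. Min {shi_pos n x j | j. j \<in> {1..n} \<and> shi_same_chain n x i j}))"

end

theory Submission
  imports Defs
begin

(*
  Inside the complement of the arrangement the sign pattern of the differences x_i - x_j
  relative to 0 and 1 is constant on a region, and the set of points with a given pattern is
  convex, hence connected; so the regions are exactly the sign classes and sigma_n can be
  evaluated at any point of a region.

  For a point, the surviving arcs are pairwise non-nested: every element is the source and the
  target of at most one of them, and they preserve the order of positions. Hence the chains are
  the fibres of f = sigma_n(R), consecutive elements of a fibre are joined by a surviving arc, and
  the word w is recovered from f alone: position p holds the least element of the fibre over p if
  that fibre is non-empty, and otherwise the fibre successor of the earliest placed element whose
  successor is still missing. As the arcs of R are the pairs enclosing a surviving arc, f
  determines R.

  Conversely, for any parking function this greedy procedure never gets stuck (the parking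
  condition supplies a missing successor whenever p is not a value of f), and the word and arcs
  it produces are realised by coordinates chosen one at a time from right to left.
*)

section \<open>Regions as sign classes\<close>

definition shi_same_side :: "nat \<Rightarrow> (nat \<Rightarrow> real) \<Rightarrow> (nat \<Rightarrow> real) \<Rightarrow> bool" where
  "shi_same_side n x y \<longleftrightarrow> (\<forall>i j. 1 \<le> i \<longrightarrow> i < j \<longrightarrow> j \<le> n \<longrightarrow>
      (x i - x j < 0 \<longleftrightarrow> y i - y j < 0) \<and> (x i - x j < 1 \<longleftrightarrow> y i - y j < 1))"

lemma connected_not_mem_less_iff:
  fixes S :: "'a::linorder_topology set"
  assumes "connected S" "c \<notin> S" "a \<in> S" "b \<in> S"
  shows "a < c \<longleftrightarrow> b < c"
  using connectedD_interval[OF assms(1,3,4), of c] connectedD_interval[OF assms(1,4,3), of c]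
    assms(2)
  by force

lemma convex_combination_less_iff:
  fixes a b c u v :: real
  assumes "a \<noteq> c" "b \<noteq> c" "a < c \<longleftrightarrow> b < c" "0 \<le> u" "0 \<le> v" "u + v = 1"
  shows "u * a + v * b \<noteq> c \<and> (u * a + v * b < c \<longleftrightarrow> a < c)"
proof (cases "a < c")
  case True
  then show ?thesis using convex_bound_lt[of a c b u v] assms by auto
next
  case False
  then have "u * (- a) + v * (- b) < - c"
    using assms by (intro convex_bound_lt) auto
  then show ?thesis using False by auto
qed

lemma shi_same_side_if_connected_component:
  assumes "connected_component (shi_complement n) x y"
  shows "shi_same_side n x y"
proof -
  obtain T where T: "connected T" "T \<subseteq> shi_complement n" "x \<in> T" "y \<in> T"
    using assms unfolding connected_component_def by blast
  have "x i - x j < c \<longleftrightarrow> y i - y j < c" if "1 \<le> i" "i < j" "j \<le> n" "c \<in> {0, 1}" for i j c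
  proof (rule connected_not_mem_less_iff)
    show "connected ((\<lambda>z. z i - z j) ` T)"
      by (intro connected_continuous_image[OF _ T(1)] continuous_intros
          continuous_on_product_then_coordinatewise continuous_on_id)
    show "c \<notin> (\<lambda>z. z i - z j) ` T"
      using T(2) that unfolding shi_complement_def by auto
  qed (use T in auto)
  then show ?thesis unfolding shi_same_side_def by blast
qed

lemma connected_component_if_shi_same_side:
  assumes x: "x \<in> shi_complement n" and y: "y \<in> shi_complement n" and xy: "shi_same_side n x y"
  shows "connected_component (shi_complement n) x y"
proof -
  let ?h = "\<lambda>t::real. \<lambda>i. (1 - t) * x i + t * y i"
  have "?h t \<in> shi_complement n" if t: "t \<in> {0..1}" for t
  proof -
    have avoid: "?h t i - ?h t j \<noteq> c" if "1 \<le> i" "i < j" "j \<le> n" "c \<in> {0, 1}" for i j c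
    proof -
      have "?h t i - ?h t j = (1 - t) * (x i - x j) + t * (y i - y j)" by (simp add: algebra_simps)
      then show ?thesis
        using convex_combination_less_iff[of "x i - x j" c "y i - y j" "1 - t" t] x y xy t that
        unfolding shi_complement_def shi_same_side_def by auto
    qed
    moreover have "?h t i = 0" if "i \<notin> {1..n}" for i
      using x y that unfolding shi_complement_def by simp
    ultimately show ?thesis unfolding shi_complement_def by blast
  qed
  then have "?h ` {0..1} \<subseteq> shi_complement n" by blast
  moreover have "connected (?h ` {0..1})"
    by (intro connected_continuous_image connected_Icc continuous_on_coordinatewise_then_product
        continuous_intros)
  moreover have "x \<in> ?h ` {0..1}" "y \<in> ?h ` {0..1}"
    by (rule image_eqI[of _ _ 0] image_eqI[of _ _ 1]; simp)+
  ultimately show ?thesis unfolding connected_component_def by blast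
qed

lemma connected_component_shi_complement:
  assumes "x \<in> shi_complement n"
  shows "connected_component_set (shi_complement n) x = {y \<in> shi_complement n. shi_same_side n x y}"
  using assms shi_same_side_if_connected_component connected_component_if_shi_same_side
    connected_component_in by blast

section \<open>Chains of a point\<close>

definition shi_sigma_at :: "nat \<Rightarrow> (nat \<Rightarrow> real) \<Rightarrow> nat \<Rightarrow> nat" where
  "shi_sigma_at n x = (\<lambda>i\<in>{1..n}. Min {shi_pos n x j | j. j \<in> {1..n} \<and> shi_same_chain n x i j})"

definition fiber_next :: "nat \<Rightarrow> (nat \<Rightarrow> nat) \<Rightarrow> nat \<Rightarrow> nat \<Rightarrow> bool" where
  "fiber_next n f c d \<longleftrightarrow> c \<in> {1..n} \<and> d \<in> {1..n} \<and> c < d \<and> f c = f d \<and>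
     (\<forall>e\<in>{1..n}. f e = f c \<longrightarrow> \<not> (c < e \<and> e < d))"

lemma card_bij_betw_atMost:
  assumes g: "bij_betw g {1..n} {1..n}" and q: "q \<le> n"
  shows "card {k \<in> {1..n}. g k \<le> q} = q"
proof -
  have "g ` {k \<in> {1..n}. g k \<le> q} = {1..q}"
  proof
    show "g ` {k \<in> {1..n}. g k \<le> q} \<subseteq> {1..q}" using g unfolding bij_betw_def by auto
    show "{1..q} \<subseteq> g ` {k \<in> {1..n}. g k \<le> q}"
    proof
      fix p assume p: "p \<in> {1..q}"
      then have "p \<in> g ` {1..n}" using g q unfolding bij_betw_def by auto
      then show "p \<in> g ` {k \<in> {1..n}. g k \<le> q}" using p by auto
    qed
  qed
  then have "bij_betw g {k \<in> {1..n}. g k \<le> q} {1..q}"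
    by (intro bij_betw_subset[OF g]) auto
  then show ?thesis by (simp add: bij_betw_same_card)
qed

locale shi_point =
  fixes n :: nat and x :: "nat \<Rightarrow> real"
  assumes in_complement: "x \<in> shi_complement n"
begin

abbreviation "N \<equiv> {1..n}"
abbreviation "pos \<equiv> shi_pos n x"
abbreviation "is_arc \<equiv> shi_arc n x"
abbreviation "is_min_arc \<equiv> shi_min_arc n x"
abbreviation "chain \<equiv> shi_same_chain n x"
abbreviation "min_arcs \<equiv> {(a, b). is_min_arc a b}"
abbreviation "\<sigma> \<equiv> shi_sigma_at n x"

lemma inj_on_x: "inj_on x N"
proof (rule inj_onI, rule ccontr)
  fix a b assume ab: "a \<in> N" "b \<in> N" "x a = x b" "a \<noteq> b"
  then consider "a < b" | "b < a" by linarith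
  then show False
    by cases (use ab in_complement in \<open>fastforce simp: shi_complement_def\<close>)+
qed

lemma pos_less_iff:
  assumes a: "a \<in> N" and b: "b \<in> N"
  shows "pos a < pos b \<longleftrightarrow> x b < x a"
proof
  assume "x b < x a"
  then have "{k \<in> N. x k > x a} \<subset> {k \<in> N. x k > x b}" using a by auto
  then show "pos a < pos b" unfolding shi_pos_def by (simp add: psubset_card_mono)
next
  assume less: "pos a < pos b"
  show "x b < x a"
  proof (rule ccontr)
    assume "\<not> x b < x a"
    then have "{k \<in> N. x k > x b} \<subseteq> {k \<in> N. x k > x a}" by auto
    then have "card {k \<in> N. x k > x b} \<le> card {k \<in> N. x k > x a}" by (intro card_mono) auto
    then show False using less unfolding shi_pos_def by simp
  qed
qed

lemma pos_le_iff: "a \<in> N \<Longrightarrow> b \<in> N \<Longrightarrow> pos a \<le> pos b \<longleftrightarrow> x b \<le> x a"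
  using pos_less_iff[of b a] by (simp add: not_less[symmetric])

lemma inj_on_pos: "inj_on pos N"
proof (rule inj_onI)
  fix a b assume ab: "a \<in> N" "b \<in> N" "pos a = pos b"
  then have "\<not> x a < x b" "\<not> x b < x a" using pos_less_iff[of a b] pos_less_iff[of b a] by auto
  then have "x a = x b" by linarith
  then show "a = b" using inj_on_x ab by (simp add: inj_on_eq_iff)
qed

lemma pos_in: assumes a: "a \<in> N" shows "pos a \<in> N"
proof -
  have "{k \<in> N. x k > x a} \<subseteq> N - {a}" by auto
  then have "card {k \<in> N. x k > x a} \<le> n - 1"
    using a card_mono[of "N - {a}"] by fastforce
  then show ?thesis using a unfolding shi_pos_def by auto
qed

lemma bij_pos: "bij_betw pos N N"
  using inj_on_pos pos_in endo_inj_surj[of N pos] unfolding bij_betw_def by blast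

lemma is_arc_D: "is_arc i j \<Longrightarrow> i \<in> N \<and> j \<in> N \<and> i < j \<and> pos i < pos j"
  unfolding shi_arc_def using pos_less_iff[of i j] by auto

lemma min_arc_D: "is_min_arc c d \<Longrightarrow> is_arc c d \<and> c \<in> N \<and> d \<in> N \<and> c < d \<and> pos c < pos d"
  unfolding shi_min_arc_def using is_arc_D by blast

lemma min_arc_not_nested:
  assumes "is_min_arc c d" "is_min_arc c' d'" "pos c \<le> pos c'" "pos d' \<le> pos d"
  shows "c = c' \<and> d = d'"
  using assms min_arc_D unfolding shi_min_arc_def by blast

lemma min_arc_target_unique: "is_min_arc c d \<Longrightarrow> is_min_arc c d' \<Longrightarrow> d = d'"
  using min_arc_not_nested[of c d c d'] min_arc_not_nested[of c d' c d] by fastforce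

lemma min_arc_source_unique: "is_min_arc c d \<Longrightarrow> is_min_arc c' d \<Longrightarrow> c = c'"
  using min_arc_not_nested[of c d c' d] min_arc_not_nested[of c' d c d] by fastforce

lemma min_arc_pos_mono: "is_min_arc c d \<Longrightarrow> is_min_arc c' d' \<Longrightarrow> pos c < pos c' \<Longrightarrow> pos d < pos d'"
  using min_arc_not_nested[of c d c' d'] by force

lemma arc_contains_min_arc:
  "is_arc i l \<Longrightarrow> \<exists>c d. is_min_arc c d \<and> pos i \<le> pos c \<and> pos d \<le> pos l"
proof (induction "pos l - pos i" arbitrary: i l rule: less_induct)
  case less
  show ?case
  proof (cases "is_min_arc i l")
    case False
    then obtain j k where jk: "is_arc j k" "(j, k) \<noteq> (i, l)" "pos i \<le> pos j" "pos k \<le> pos l"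
      using less.prems unfolding shi_min_arc_def by blast
    then have "pos j \<noteq> pos i \<or> pos k \<noteq> pos l"
      using is_arc_D less.prems inj_on_pos by (metis inj_on_eq_iff)
    then have "pos k - pos j < pos l - pos i" using jk is_arc_D[OF jk(1)] by auto
    from less.hyps[OF this jk(1)] jk show ?thesis by fastforce
  qed blast
qed

lemma is_arc_iff:
  "is_arc i l \<longleftrightarrow> i \<in> N \<and> l \<in> N \<and> i < l \<and> (\<exists>c d. is_min_arc c d \<and> pos i \<le> pos c \<and> pos d \<le> pos l)"
proof
  assume "i \<in> N \<and> l \<in> N \<and> i < l \<and> (\<exists>c d. is_min_arc c d \<and> pos i \<le> pos c \<and> pos d \<le> pos l)"
  then obtain c d where il: "i \<in> N" "l \<in> N" "i < l"
    and cd: "is_min_arc c d" "pos i \<le> pos c" "pos d \<le> pos l" by blast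
  then have "x c \<le> x i" "x l \<le> x d" "x c - x d > 1"
    using pos_le_iff min_arc_D[OF cd(1)] unfolding shi_arc_def by auto
  then show "is_arc i l" using il unfolding shi_arc_def by auto
qed (use arc_contains_min_arc is_arc_D in blast)

lemma chain_iff: "chain i j \<longleftrightarrow> (i, j) \<in> (min_arcs \<union> min_arcs\<inverse>)\<^sup>*"
  unfolding shi_same_chain_def converse_unfold by simp

lemma chain_refl: "chain a a"
  unfolding chain_iff by simp

lemma chain_sym: "chain a b \<Longrightarrow> chain b a"
proof -
  have "(min_arcs \<union> min_arcs\<inverse>)\<inverse> = min_arcs \<union> min_arcs\<inverse>" by auto
  then show "chain a b \<Longrightarrow> chain b a" unfolding chain_iff by (metis rtrancl_converseI)
qed

lemma chain_trans: "chain a b \<Longrightarrow> chain b c \<Longrightarrow> chain a c"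
  unfolding chain_iff by (rule rtrancl_trans)

lemma chain_if_min_arc: "is_min_arc a b \<Longrightarrow> chain a b"
  unfolding chain_iff by auto

lemma min_arcs_rtrancl_D:
  "(a, b) \<in> min_arcs\<^sup>* \<Longrightarrow> a = b \<or> (a \<in> N \<and> b \<in> N \<and> a < b \<and> pos a < pos b)"
  by (induction rule: rtrancl_induct) (use min_arc_D in fastforce)+

lemma min_arcs_rtrancl_linear:
  assumes "(h, a) \<in> min_arcs\<^sup>*" "(h, b) \<in> min_arcs\<^sup>*"
  shows "(a, b) \<in> min_arcs\<^sup>* \<or> (b, a) \<in> min_arcs\<^sup>*"
  using assms(2)
proof (induction rule: rtrancl_induct)
  case (step b b')
  from step.IH show ?case
  proof
    assume "(a, b) \<in> min_arcs\<^sup>*"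
    with step.hyps(2) show ?thesis by (simp add: rtrancl_into_rtrancl)
  next
    assume "(b, a) \<in> min_arcs\<^sup>*"
    then show ?thesis
    proof (cases rule: converse_rtranclE)
      case (step b'')
      then show ?thesis using step.hyps(2) min_arc_target_unique by auto
    qed (use step.hyps(2) in auto)
  qed
qed (use assms(1) in simp)

definition chain_head :: "nat \<Rightarrow> bool" where
  "chain_head h \<longleftrightarrow> h \<in> N \<and> (\<forall>c. \<not> is_min_arc c h)"

lemma chain_head_reaches:
  assumes h: "chain_head h" and c: "chain h b"
  shows "(h, b) \<in> min_arcs\<^sup>*"
  using c unfolding chain_iff
proof (induction rule: rtrancl_induct)
  case (step v u)
  from step.hyps(2) show ?case
  proof
    assume "(v, u) \<in> min_arcs"
    with step.IH show ?thesis by (rule rtrancl_into_rtrancl)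
  next
    assume vu: "(v, u) \<in> min_arcs\<inverse>"
    from step.IH show ?thesis
    proof (cases rule: rtranclE)
      case base then show ?thesis using h vu unfolding chain_head_def by auto
    next
      case (step v')
      then show ?thesis using vu min_arc_source_unique by auto
    qed
  qed
qed simp

lemma exists_chain_head: "a \<in> N \<Longrightarrow> \<exists>h. chain_head h \<and> chain a h"
proof (induction "pos a" arbitrary: a rule: less_induct)
  case less
  show ?case
  proof (cases "chain_head a")
    case False
    then obtain c where c: "is_min_arc c a" unfolding chain_head_def using less.prems by auto
    then have "pos c < pos a" "c \<in> N" using min_arc_D by auto
    from less.hyps[OF this] obtain h where "chain_head h" "chain c h" by blast
    then show ?thesis using chain_trans chain_sym chain_if_min_arc c by blast
  qed (use chain_refl in blast)
qed

lemma sigma_eq_pos_chain_head: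
  assumes a: "a \<in> N" and h: "chain_head h" "chain a h"
  shows "\<sigma> a = pos h"
proof -
  have "Min {pos j | j. j \<in> N \<and> chain a j} = pos h"
  proof (rule Min_eqI)
    show "finite {pos j | j. j \<in> N \<and> chain a j}" by simp
    show "pos h \<in> {pos j | j. j \<in> N \<and> chain a j}" using h unfolding chain_head_def by auto
  next
    fix p assume "p \<in> {pos j | j. j \<in> N \<and> chain a j}"
    then obtain j where j: "p = pos j" "j \<in> N" "chain a j" by auto
    then have "(h, j) \<in> min_arcs\<^sup>*" using chain_head_reaches h chain_sym chain_trans by blast
    then show "pos h \<le> p" using min_arcs_rtrancl_D j by force
  qed
  then show ?thesis using a unfolding shi_sigma_at_def by simp
qed

lemma chain_head_unique: "chain_head h \<Longrightarrow> chain_head h' \<Longrightarrow> chain h h' \<Longrightarrow> h = h'"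
  using chain_head_reaches chain_sym min_arcs_rtrancl_D by (metis order_less_asym)

lemma sigma_eq_iff_chain:
  assumes a: "a \<in> N" and b: "b \<in> N"
  shows "\<sigma> a = \<sigma> b \<longleftrightarrow> chain a b"
proof -
  obtain ha where ha: "chain_head ha" "chain a ha" using exists_chain_head a by blast
  obtain hb where hb: "chain_head hb" "chain b hb" using exists_chain_head b by blast
  have "\<sigma> a = \<sigma> b \<longleftrightarrow> ha = hb"
    using sigma_eq_pos_chain_head a b ha hb inj_on_pos unfolding chain_head_def
    by (metis inj_on_eq_iff)
  also have "\<dots> \<longleftrightarrow> chain a b"
    using ha hb chain_head_unique chain_sym chain_trans by metis
  finally show ?thesis .
qed

lemma sigma_le_pos: assumes a: "a \<in> N" shows "\<sigma> a \<le> pos a"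
proof -
  obtain h where h: "chain_head h" "chain a h" using exists_chain_head a by blast
  have "(h, a) \<in> min_arcs\<^sup>*" using chain_head_reaches h chain_sym by blast
  then show ?thesis using sigma_eq_pos_chain_head[OF a h] by (auto dest: min_arcs_rtrancl_D)
qed

lemma sigma_in: assumes a: "a \<in> N" shows "\<sigma> a \<in> N"
proof -
  obtain h where h: "chain_head h" "chain a h" using exists_chain_head a by blast
  then show ?thesis using sigma_eq_pos_chain_head[OF a h] pos_in unfolding chain_head_def by auto
qed

lemma chain_head_iff_sigma_eq_pos: assumes a: "a \<in> N" shows "chain_head a \<longleftrightarrow> \<sigma> a = pos a"
proof
  assume sa: "\<sigma> a = pos a"
  show "chain_head a" unfolding chain_head_def
  proof (intro conjI allI notI)
    fix c assume c: "is_min_arc c a"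
    then have "c \<in> N" "pos c < pos a" "\<sigma> c = \<sigma> a"
      using min_arc_D sigma_eq_iff_chain chain_if_min_arc by blast+
    then show False using sigma_le_pos sa by fastforce
  qed (use a in auto)
qed (use sigma_eq_pos_chain_head a chain_refl in blast)

lemma chain_head_le: assumes h: "chain_head h" and b: "b \<in> N" "\<sigma> b = \<sigma> h" shows "h \<le> b"
proof -
  have "chain h b" using sigma_eq_iff_chain[of h b] b h unfolding chain_head_def by simp
  then have "(h, b) \<in> min_arcs\<^sup>*" by (rule chain_head_reaches[OF h])
  then show ?thesis by (auto dest: min_arcs_rtrancl_D)
qed

lemma fiber_next_if_min_arc:
  assumes m: "is_min_arc c d"
  shows "fiber_next n \<sigma> c d"
proof -
  have p: "c \<in> N" "d \<in> N" "c < d" using min_arc_D m by auto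
  obtain h where h: "chain_head h" "chain c h" using exists_chain_head p by blast
  have hc: "(h, c) \<in> min_arcs\<^sup>*" using chain_head_reaches h chain_sym by blast
  show ?thesis unfolding fiber_next_def
  proof (intro conjI ballI impI notI)
    fix e assume e: "e \<in> N" "\<sigma> e = \<sigma> c" and ce: "c < e \<and> e < d"
    have "chain c e" using sigma_eq_iff_chain e p by metis
    then have "(h, e) \<in> min_arcs\<^sup>*" using chain_head_reaches h chain_sym chain_trans by blast
    from min_arcs_rtrancl_linear[OF hc this] show False
    proof
      assume "(c, e) \<in> min_arcs\<^sup>*"
      then show False
      proof (cases rule: converse_rtranclE)
        case (step c')
        then have "c' = d" "(d, e) \<in> min_arcs\<^sup>*" using m min_arc_target_unique by auto
        then show ?thesis using ce by (auto dest: min_arcs_rtrancl_D)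
      qed (use ce in simp)
    next
      assume "(e, c) \<in> min_arcs\<^sup>*"
      then show False using ce by (auto dest: min_arcs_rtrancl_D)
    qed
  qed (use p sigma_eq_iff_chain chain_if_min_arc m in auto)
qed

lemma min_arc_if_fiber_next:
  assumes cd: "fiber_next n \<sigma> c d"
  shows "is_min_arc c d"
proof -
  have p: "c \<in> N" "d \<in> N" "c < d" "chain c d"
    and gap: "\<And>e. e \<in> N \<Longrightarrow> \<sigma> e = \<sigma> c \<Longrightarrow> \<not> (c < e \<and> e < d)"
    using cd unfolding fiber_next_def using sigma_eq_iff_chain by auto
  obtain h where h: "chain_head h" "chain c h" using exists_chain_head p by blast
  have hc: "(h, c) \<in> min_arcs\<^sup>*" using chain_head_reaches h chain_sym by blast
  have "(h, d) \<in> min_arcs\<^sup>*" using chain_head_reaches h p chain_sym chain_trans by blast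
  from min_arcs_rtrancl_linear[OF hc this] show ?thesis
  proof
    assume "(c, d) \<in> min_arcs\<^sup>*"
    then show ?thesis
    proof (cases rule: converse_rtranclE)
      case (step c')
      then have c': "is_min_arc c c'" "(c', d) \<in> min_arcs\<^sup>*" by auto
      have "c' \<in> N" "c < c'" using min_arc_D[OF c'(1)] by auto
      moreover have "\<sigma> c' = \<sigma> c"
        using sigma_eq_iff_chain[of c c'] chain_if_min_arc[OF c'(1)] \<open>c' \<in> N\<close> p by simp
      moreover have "c' \<le> d" using c'(2) by (auto dest: min_arcs_rtrancl_D)
      ultimately have "c' = d" using gap by fastforce
      then show ?thesis using c' by simp
    qed (use p in simp)
  next
    assume "(d, c) \<in> min_arcs\<^sup>*"
    then show ?thesis using p by (auto dest: min_arcs_rtrancl_D)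
  qed
qed

lemma min_arc_iff_fiber_next: "is_min_arc c d \<longleftrightarrow> fiber_next n \<sigma> c d"
  using fiber_next_if_min_arc min_arc_if_fiber_next by blast

lemma sigma_in_parking_functions: "\<sigma> \<in> parking_functions n"
  unfolding parking_functions_def
proof (intro CollectI conjI ballI)
  show "\<sigma> \<in> N \<rightarrow>\<^sub>E N" using sigma_in by (auto simp: shi_sigma_at_def)
next
  fix j assume j: "j \<in> N"
  have "{i \<in> N. pos i \<le> j} \<subseteq> {i \<in> N. \<sigma> i \<le> j}" using sigma_le_pos by force
  then have "card {i \<in> N. pos i \<le> j} \<le> card {i \<in> N. \<sigma> i \<le> j}" by (intro card_mono) auto
  then show "j \<le> card {i \<in> N. \<sigma> i \<le> j}"
    using card_bij_betw_atMost[OF bij_pos, of j] j by simp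
qed

end

lemma same_order_iff_less_pairs:
  fixes x z :: "'a::linorder \<Rightarrow> 'b::linorder"
  assumes "inj_on x A" "inj_on z A"
  shows "(\<forall>a\<in>A. \<forall>b\<in>A. x a < x b \<longleftrightarrow> z a < z b) \<longleftrightarrow>
    (\<forall>a\<in>A. \<forall>b\<in>A. a < b \<longrightarrow> (x a < x b \<longleftrightarrow> z a < z b))"
proof
  assume pairs: "\<forall>a\<in>A. \<forall>b\<in>A. a < b \<longrightarrow> (x a < x b \<longleftrightarrow> z a < z b)"
  show "\<forall>a\<in>A. \<forall>b\<in>A. x a < x b \<longleftrightarrow> z a < z b"
  proof (intro ballI)
    fix a b assume ab: "a \<in> A" "b \<in> A"
    consider "a < b" | "a = b" | "b < a" using less_linear by blast
    then show "x a < x b \<longleftrightarrow> z a < z b"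
    proof cases
      case 3
      then have "x b < x a \<longleftrightarrow> z b < z a" "x a \<noteq> x b" "z a \<noteq> z b"
        using pairs ab assms by (auto simp: inj_on_eq_iff)
      then show ?thesis by auto
    qed (use pairs ab in auto)
  qed
qed auto

lemma shi_pos_eq_iff_same_order:
  assumes x: "x \<in> shi_complement n" and z: "z \<in> shi_complement n"
  shows "(\<forall>a\<in>{1..n}. shi_pos n x a = shi_pos n z a) \<longleftrightarrow>
    (\<forall>a\<in>{1..n}. \<forall>b\<in>{1..n}. x a < x b \<longleftrightarrow> z a < z b)"
proof
  interpret X: shi_point n x by (rule shi_point.intro[OF x])
  interpret Z: shi_point n z by (rule shi_point.intro[OF z])
  assume "\<forall>a\<in>{1..n}. X.pos a = Z.pos a"
  then show "\<forall>a\<in>{1..n}. \<forall>b\<in>{1..n}. x a < x b \<longleftrightarrow> z a < z b"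
    using X.pos_less_iff Z.pos_less_iff by metis
next
  assume "\<forall>a\<in>{1..n}. \<forall>b\<in>{1..n}. x a < x b \<longleftrightarrow> z a < z b"
  then have "{k \<in> {1..n}. x k > x a} = {k \<in> {1..n}. z k > z a}" if "a \<in> {1..n}" for a
    using that by auto
  then show "\<forall>a\<in>{1..n}. shi_pos n x a = shi_pos n z a" unfolding shi_pos_def by simp
qed

lemma shi_same_side_iff:
  assumes x: "x \<in> shi_complement n" and z: "z \<in> shi_complement n"
  shows "shi_same_side n x z \<longleftrightarrow>
    shi_arc n x = shi_arc n z \<and> (\<forall>a\<in>{1..n}. shi_pos n x a = shi_pos n z a)"
proof -
  interpret X: shi_point n x by (rule shi_point.intro[OF x])
  interpret Z: shi_point n z by (rule shi_point.intro[OF z])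
  have "X.is_arc i j = Z.is_arc i j \<longleftrightarrow>
      (1 \<le> i \<longrightarrow> i < j \<longrightarrow> j \<le> n \<longrightarrow> (x i - x j < 1 \<longleftrightarrow> z i - z j < 1))" for i j
  proof (cases "1 \<le> i \<and> i < j \<and> j \<le> n")
    case True
    then have "x i - x j \<noteq> 1" "z i - z j \<noteq> 1" using x z unfolding shi_complement_def by auto
    then show ?thesis unfolding shi_arc_def by auto
  qed (auto simp: shi_arc_def)
  then have arcs: "X.is_arc = Z.is_arc \<longleftrightarrow>
      (\<forall>i j. 1 \<le> i \<longrightarrow> i < j \<longrightarrow> j \<le> n \<longrightarrow> (x i - x j < 1 \<longleftrightarrow> z i - z j < 1))"
    by (simp only: fun_eq_iff)
  show ?thesis
    unfolding shi_same_side_def arcs shi_pos_eq_iff_same_order[OF x z]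
      same_order_iff_less_pairs[OF X.inj_on_x Z.inj_on_x]
    by auto
qed

lemma shi_sigma_at_cong:
  assumes arcs: "shi_arc n x = shi_arc n z" and pos: "\<forall>a\<in>{1..n}. shi_pos n x a = shi_pos n z a"
  shows "shi_sigma_at n x = shi_sigma_at n z"
proof -
  have pos_eq: "a \<in> {1..n} \<Longrightarrow> shi_pos n x a = shi_pos n z a" for a
    using pos by blast
  have in_N: "shi_arc n z j k \<Longrightarrow> j \<in> {1..n} \<and> k \<in> {1..n}" for j k
    unfolding shi_arc_def by auto
  have "shi_min_arc n x i l = shi_min_arc n z i l" for i l
    unfolding shi_min_arc_def arcs
    by (intro conj_cong refl arg_cong[where f = Not] ex_cong1) (use in_N pos_eq in auto)
  then have "shi_min_arc n x = shi_min_arc n z" by blast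
  then have chains: "shi_same_chain n x = shi_same_chain n z"
    unfolding shi_same_chain_def by simp
  have "{shi_pos n x j | j. j \<in> {1..n} \<and> shi_same_chain n x i j} =
        {shi_pos n z j | j. j \<in> {1..n} \<and> shi_same_chain n z i j}" for i
    using pos unfolding chains by force
  then show ?thesis unfolding shi_sigma_at_def by simp
qed

lemma shi_sigma_connected_component:
  assumes x: "x \<in> shi_complement n"
  shows "shi_sigma n (connected_component_set (shi_complement n) x) = shi_sigma_at n x"
proof -
  let ?R = "connected_component_set (shi_complement n) x"
  have "x \<in> ?R" using x by simp
  then have "(SOME z. z \<in> ?R) \<in> ?R" by (rule someI[where P = "\<lambda>z. z \<in> ?R"])
  then have "shi_sigma_at n x = shi_sigma_at n (SOME z. z \<in> ?R)"
    using shi_sigma_at_cong shi_same_side_iff x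
    unfolding connected_component_shi_complement[OF x] by blast
  then show ?thesis unfolding shi_sigma_def shi_sigma_at_def Let_def by simp
qed

section \<open>The word of a point is determined by its parking function\<close>

definition fiber_min :: "nat \<Rightarrow> (nat \<Rightarrow> nat) \<Rightarrow> nat \<Rightarrow> nat" where
  "fiber_min n f p = (LEAST a. a \<in> {1..n} \<and> f a = p)"

definition fiber_succ :: "nat \<Rightarrow> (nat \<Rightarrow> nat) \<Rightarrow> nat \<Rightarrow> nat" where
  "fiber_succ n f c = (SOME d. fiber_next n f c d)"

definition waiting :: "nat \<Rightarrow> (nat \<Rightarrow> nat) \<Rightarrow> nat list \<Rightarrow> nat \<Rightarrow> bool" where
  "waiting n f ws i \<longleftrightarrow> i < length ws \<and> (\<exists>d. fiber_next n f (ws ! i) d \<and> d \<notin> set ws)"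

definition greedy_next :: "nat \<Rightarrow> (nat \<Rightarrow> nat) \<Rightarrow> nat list \<Rightarrow> nat" where
  "greedy_next n f ws =
     (if Suc (length ws) \<in> f ` {1..n} then fiber_min n f (Suc (length ws))
      else fiber_succ n f (ws ! (LEAST i. waiting n f ws i)))"

primrec greedy_word :: "nat \<Rightarrow> (nat \<Rightarrow> nat) \<Rightarrow> nat \<Rightarrow> nat list" where
  "greedy_word n f 0 = []"
| "greedy_word n f (Suc p) = greedy_word n f p @ [greedy_next n f (greedy_word n f p)]"

lemma length_greedy_word [simp]: "length (greedy_word n f p) = p"
  by (induction p) simp_all

context shi_point
begin

definition elem_at :: "nat \<Rightarrow> nat" where
  "elem_at q = inv_into N pos q"

lemma pos_elem_at: "q \<in> N \<Longrightarrow> elem_at q \<in> N \<and> pos (elem_at q) = q"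
  unfolding elem_at_def using bij_pos
  by (metis bij_betw_apply bij_betw_inv_into bij_betw_inv_into_right)

lemma elem_at_pos: "a \<in> N \<Longrightarrow> elem_at (pos a) = a"
  unfolding elem_at_def using bij_pos by (simp add: bij_betw_inv_into_left)

lemma mem_elem_at_prefix:
  assumes "p \<le> n" "b \<in> N"
  shows "b \<in> set (map elem_at [1..<Suc p]) \<longleftrightarrow> pos b \<le> p"
proof
  assume "b \<in> set (map elem_at [1..<Suc p])"
  then show "pos b \<le> p" using pos_elem_at assms(1) by (auto simp del: upt_Suc)
next
  assume "pos b \<le> p"
  then have "elem_at (pos b) \<in> set (map elem_at [1..<Suc p])"
    using pos_in[OF assms(2)] by (auto simp del: upt_Suc)
  then show "b \<in> set (map elem_at [1..<Suc p])" using elem_at_pos[OF assms(2)] by simp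
qed

lemma fiber_min_sigma_eq_elem_at:
  assumes q: "q \<in> N" and attained: "q \<in> \<sigma> ` N"
  shows "fiber_min n \<sigma> q = elem_at q"
proof -
  define a where "a = elem_at q"
  have a: "a \<in> N" "pos a = q" using pos_elem_at[OF q] unfolding a_def by auto
  obtain b where b: "b \<in> N" "\<sigma> b = q" using attained by auto
  obtain h where h: "chain_head h" "chain b h" using exists_chain_head b(1) by blast
  have "pos h = pos a" using sigma_eq_pos_chain_head[OF b(1) h] b(2) a(2) by simp
  then have "h = a" using inj_onD[OF inj_on_pos, of h a] a(1) h(1) unfolding chain_head_def by simp
  then have head: "chain_head a" using h(1) by simp
  then have sa: "\<sigma> a = q" using chain_head_iff_sigma_eq_pos[OF a(1)] a(2) by simp
  show ?thesis unfolding fiber_min_def a_def[symmetric]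
  proof (rule Least_equality)
    show "a \<in> N \<and> \<sigma> a = q" using a sa by simp
    fix e assume "e \<in> N \<and> \<sigma> e = q"
    then show "a \<le> e" using chain_head_le[OF head] sa by simp
  qed
qed

text \<open>A position that is not a value of \<open>\<sigma>\<close> holds the target of a minimal arc, and by
  \<open>min_arc_pos_mono\<close> its source is the earliest placed element whose successor is missing.\<close>
lemma fiber_succ_first_waiting:
  assumes p: "p < n" and nonvalue: "Suc p \<notin> \<sigma> ` N"
  defines "ws \<equiv> map elem_at [1..<Suc p]"
  shows "fiber_succ n \<sigma> (ws ! (LEAST i. waiting n \<sigma> ws i)) = elem_at (Suc p)"
proof -
  define a where "a = elem_at (Suc p)"
  have a: "a \<in> N" "pos a = Suc p" using pos_elem_at[of "Suc p"] p unfolding a_def by auto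
  have nth: "ws ! i = elem_at (Suc i)" if "i < p" for i
    using that unfolding ws_def by (simp add: nth_map_upt del: upt_Suc)
  have "\<not> chain_head a"
  proof
    assume "chain_head a"
    then have "\<sigma> a = Suc p" using chain_head_iff_sigma_eq_pos[OF a(1)] a(2) by simp
    then show False using nonvalue a(1) by (metis imageI)
  qed
  then obtain c where c: "is_min_arc c a" using a(1) unfolding chain_head_def by blast
  define i where "i = pos c - 1"
  have i: "i < p" "ws ! i = c"
    using min_arc_D[OF c] a pos_in[of c] nth elem_at_pos unfolding i_def by auto
  have "a \<notin> set ws" using mem_elem_at_prefix[OF _ a(1), of p] p a(2) unfolding ws_def by simp
  then have "waiting n \<sigma> ws i"
    unfolding waiting_def using i c min_arc_iff_fiber_next by (auto simp: ws_def)
  moreover have "\<not> waiting n \<sigma> ws i'" if "i' < i" for i'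
  proof
    assume "waiting n \<sigma> ws i'"
    then obtain d' where d': "is_min_arc (ws ! i') d'" "d' \<notin> set ws"
      unfolding waiting_def min_arc_iff_fiber_next by blast
    have "pos (ws ! i') < pos c"
      using that i nth[of i'] pos_elem_at[of "Suc i'"] p unfolding i_def by auto
    then have "pos d' < pos a" using min_arc_pos_mono[OF d'(1) c] by simp
    then show False
      using d' mem_elem_at_prefix[of p d'] min_arc_D[OF d'(1)] a p unfolding ws_def by auto
  qed
  ultimately have "(LEAST i. waiting n \<sigma> ws i) = i"
    by (intro Least_equality) (auto simp: not_less[symmetric])
  moreover have "fiber_succ n \<sigma> c = a" unfolding fiber_succ_def
    by (rule some_equality) (use c min_arc_iff_fiber_next min_arc_target_unique in auto)
  ultimately show ?thesis using i unfolding a_def by simp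
qed

lemma greedy_next_elem_at:
  assumes "p < n"
  shows "greedy_next n \<sigma> (map elem_at [1..<Suc p]) = elem_at (Suc p)"
  using fiber_min_sigma_eq_elem_at[of "Suc p"] fiber_succ_first_waiting[of p] assms
  unfolding greedy_next_def by (simp del: upt_Suc)

lemma greedy_word_eq: "p \<le> n \<Longrightarrow> greedy_word n \<sigma> p = map elem_at [1..<Suc p]"
proof (induction p)
  case (Suc p)
  then show ?case using greedy_next_elem_at[of p] by (simp del: upt_Suc add: upt_Suc_append)
qed simp

end

lemma shi_pos_eq_if_sigma_eq:
  assumes x: "x \<in> shi_complement n" and y: "y \<in> shi_complement n"
    and eq: "shi_sigma_at n x = shi_sigma_at n y" and a: "a \<in> {1..n}"
  shows "shi_pos n x a = shi_pos n y a"
proof -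
  interpret X: shi_point n x by (rule shi_point.intro[OF x])
  interpret Y: shi_point n y by (rule shi_point.intro[OF y])
  have "map X.elem_at [1..<Suc n] = map Y.elem_at [1..<Suc n]"
    using X.greedy_word_eq[of n] Y.greedy_word_eq[of n] eq by simp
  then have "X.elem_at q = Y.elem_at q" if "q \<in> X.N" for q
    using that by (simp add: map_eq_conv del: upt_Suc)
  then have "X.elem_at (Y.pos a) = a" using Y.elem_at_pos[OF a] Y.pos_in[OF a] by simp
  then show ?thesis using X.pos_elem_at[OF Y.pos_in[OF a]] by simp
qed

lemma shi_same_side_if_sigma_eq:
  assumes x: "x \<in> shi_complement n" and y: "y \<in> shi_complement n"
    and eq: "shi_sigma_at n x = shi_sigma_at n y"
  shows "shi_same_side n x y"
proof -
  interpret X: shi_point n x by (rule shi_point.intro[OF x])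
  interpret Y: shi_point n y by (rule shi_point.intro[OF y])
  have pos: "\<forall>a\<in>{1..n}. X.pos a = Y.pos a" using shi_pos_eq_if_sigma_eq assms by blast
  have min_arcs: "X.is_min_arc = Y.is_min_arc"
    using X.min_arc_iff_fiber_next Y.min_arc_iff_fiber_next eq by (simp add: fun_eq_iff)
  have "X.is_arc i l \<longleftrightarrow> Y.is_arc i l" for i l
  proof -
    have "X.pos i \<le> X.pos c \<and> X.pos d \<le> X.pos l \<longleftrightarrow> Y.pos i \<le> Y.pos c \<and> Y.pos d \<le> Y.pos l"
      if "i \<in> X.N" "l \<in> X.N" "Y.is_min_arc c d" for c d
      using pos that Y.min_arc_D[OF that(3)] by simp
    then show ?thesis unfolding X.is_arc_iff Y.is_arc_iff min_arcs by blast
  qed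
  then show ?thesis using shi_same_side_iff x y pos by blast
qed

section \<open>Every parking function is attained\<close>

lemma finite_sets_separated:
  fixes L U :: "real set"
  assumes L: "finite L" and U: "finite U" and less: "\<forall>l\<in>L. \<forall>u\<in>U. l < u"
  shows "\<exists>v. (\<forall>l\<in>L. l < v) \<and> (\<forall>u\<in>U. v < u)"
proof -
  consider "U = {}" | "L = {}" "U \<noteq> {}" | "L \<noteq> {}" "U \<noteq> {}" by blast
  then show ?thesis
  proof cases
    case 1
    have "l < Max (insert 0 L) + 1" if "l \<in> L" for l
    proof -
      have "l \<le> Max (insert 0 L)" using L that by (intro Max_ge) auto
      then show ?thesis by simp
    qed
    then show ?thesis using 1 by blast
  next
    case 2
    then show ?thesis using Min_le[OF U] by (intro exI[of _ "Min U - 1"]) fastforce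
  next
    case 3
    then have "Max L < Min U" using L U less by simp
    then show ?thesis using Max_ge[OF L] Min_le[OF U]
      by (intro exI[of _ "(Max L + Min U) / 2"]) fastforce
  qed
qed

definition realises_thresholds :: "nat \<Rightarrow> (nat \<Rightarrow> nat) \<Rightarrow> nat \<Rightarrow> (nat \<Rightarrow> real) \<Rightarrow> bool" where
  "realises_thresholds m r k X \<longleftrightarrow> (\<forall>p q. k \<le> p \<longrightarrow> p < q \<longrightarrow> q \<le> m \<longrightarrow>
      X q < X p \<and> (r p \<le> q \<longrightarrow> 1 < X p - X q) \<and> (q < r p \<longrightarrow> X p - X q < 1))"

lemma realises_thresholds_extend:
  assumes mono: "\<And>q. k \<le> q \<Longrightarrow> q \<le> m \<Longrightarrow> r k \<le> r q"
    and X: "realises_thresholds m r (Suc k) X"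
  shows "\<exists>v. realises_thresholds m r k (X(k := v))"
proof -
  have X': "X q < X p" "r p \<le> q \<Longrightarrow> 1 < X p - X q" "q < r p \<Longrightarrow> X p - X q < 1"
    if "Suc k \<le> p" "p < q" "q \<le> m" for p q
    using X that unfolding realises_thresholds_def by blast+
  let ?L = "X ` {Suc k..m} \<union> (\<lambda>q. X q + 1) ` {q \<in> {Suc k..m}. r k \<le> q}"
  let ?U = "(\<lambda>q. X q + 1) ` {q \<in> {Suc k..m}. q < r k}"
  have "X q < X q' + 1" if "q \<in> {Suc k..m}" "q' \<in> {Suc k..m}" "q' < r k" for q q'
  proof (cases "q < q'")
    case True
    then show ?thesis using X'(3)[of q q'] mono[of q] that by fastforce
  next
    case False
    then show ?thesis using X'(1)[of q' q] that by (cases "q = q'") auto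
  qed
  moreover have "X q + 1 < X q' + 1" if "q \<in> {Suc k..m}" "r k \<le> q" "q' \<in> {Suc k..m}" "q' < r k"
    for q q'
    using X'(1)[of q' q] that by auto
  ultimately have "\<forall>l\<in>?L. \<forall>u\<in>?U. l < u" by blast
  then obtain v where v: "\<forall>l\<in>?L. l < v" "\<forall>u\<in>?U. v < u"
    using finite_sets_separated[of ?L ?U] by auto
  have "realises_thresholds m r k (X(k := v))" unfolding realises_thresholds_def
  proof (intro allI impI)
    fix p q assume pq: "k \<le> p" "p < q" "q \<le> m"
    show "(X(k := v)) q < (X(k := v)) p \<and> (r p \<le> q \<longrightarrow> 1 < (X(k := v)) p - (X(k := v)) q) \<and>
        (q < r p \<longrightarrow> (X(k := v)) p - (X(k := v)) q < 1)"
    proof (cases "p = k")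
      case True
      then have q: "q \<in> {Suc k..m}" using pq by simp
      have "X q < v" "r k \<le> q \<Longrightarrow> X q + 1 < v" "q < r k \<Longrightarrow> v < X q + 1"
        using v q by auto
      then show ?thesis using True pq by auto
    next
      case False
      then show ?thesis using X' pq by simp
    qed
  qed
  then show ?thesis by blast
qed

lemma realises_thresholds_exists:
  assumes mono: "\<And>p q. 1 \<le> p \<Longrightarrow> p \<le> q \<Longrightarrow> q \<le> m \<Longrightarrow> r p \<le> r q"
  shows "\<exists>X. realises_thresholds m r 1 X"
proof -
  have "1 \<le> Suc m" by simp
  then show ?thesis
  proof (induction rule: inc_induct)
    case base
    then show ?case unfolding realises_thresholds_def by auto
  next
    case (step k)
    then obtain X where "realises_thresholds m r (Suc k) X" by blast
    then show ?case using realises_thresholds_extend[of k m r] mono step.hyps(1) by blast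
  qed
qed

locale parking =
  fixes n :: nat and f :: "nat \<Rightarrow> nat"
  assumes parking: "f \<in> parking_functions n"
begin

abbreviation "N \<equiv> {1..n}"
abbreviation "is_next \<equiv> fiber_next n f"

lemma f_in: "a \<in> N \<Longrightarrow> f a \<in> N"
  using parking unfolding parking_functions_def by auto

lemma f_outside: "a \<notin> N \<Longrightarrow> f a = undefined"
  using parking unfolding parking_functions_def by auto

lemma parking_card: "j \<in> N \<Longrightarrow> j \<le> card {i \<in> N. f i \<le> j}"
  using parking unfolding parking_functions_def by auto

lemma fiber_min_in:
  assumes "p \<in> f ` N"
  shows "fiber_min n f p \<in> N \<and> f (fiber_min n f p) = p"
proof -
  obtain a where a: "a \<in> N" "f a = p" using assms by auto
  show ?thesis unfolding fiber_min_def by (rule LeastI[of _ a]) (use a in auto)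
qed

lemma fiber_min_le: "a \<in> N \<Longrightarrow> f a = p \<Longrightarrow> fiber_min n f p \<le> a"
  unfolding fiber_min_def by (rule Least_le) auto

lemma is_next_D: "is_next c d \<Longrightarrow> c \<in> N \<and> d \<in> N \<and> c < d \<and> f c = f d"
  unfolding fiber_next_def by auto

lemma is_next_target_unique: "is_next c d \<Longrightarrow> is_next c d' \<Longrightarrow> d = d'"
  unfolding fiber_next_def by (metis linorder_neqE_nat)

lemma is_next_source_unique: "is_next c d \<Longrightarrow> is_next c' d \<Longrightarrow> c = c'"
  unfolding fiber_next_def by (metis linorder_neqE_nat)

lemma not_is_next_fiber_min:
  assumes p: "p \<in> f ` N" shows "\<not> is_next c (fiber_min n f p)"
proof
  assume "is_next c (fiber_min n f p)"
  then have "c \<in> N" "c < fiber_min n f p" "f c = p" using is_next_D fiber_min_in[OF p] by auto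
  then show False using fiber_min_le[of c p] by simp
qed

lemma fiber_succ_eq: "is_next c d \<Longrightarrow> fiber_succ n f c = d"
  unfolding fiber_succ_def using is_next_target_unique by (metis someI_ex)

lemma fiber_min_or_is_next:
  assumes a: "a \<in> N"
  shows "a = fiber_min n f (f a) \<or> (\<exists>c. is_next c a)"
proof (cases "a = fiber_min n f (f a)")
  case False
  have fa: "f a \<in> f ` N" using a by auto
  define S where "S = {e \<in> N. f e = f a \<and> e < a}"
  have S: "finite S" "fiber_min n f (f a) \<in> S"
    unfolding S_def using fiber_min_in[OF fa] fiber_min_le[OF a] False by auto
  have "Max S \<in> S" using S Max_in by blast
  then have c: "Max S \<in> N" "f (Max S) = f a" "Max S < a" unfolding S_def by auto
  have "is_next (Max S) a" unfolding fiber_next_def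
  proof (intro conjI ballI impI notI)
    fix e assume "e \<in> N" "f e = f (Max S)" "Max S < e \<and> e < a"
    then have "e \<in> S" "Max S < e" using c unfolding S_def by auto
    then show False using Max_ge[OF S(1)] by (simp add: leD)
  qed (use c a in auto)
  then show ?thesis by blast
qed simp

definition preds_before :: "nat list \<Rightarrow> bool" where
  "preds_before ws \<longleftrightarrow> (\<forall>j c. j < length ws \<longrightarrow> is_next c (ws ! j) \<longrightarrow> (\<exists>i<j. ws ! i = c))"

definition succs_fifo :: "nat list \<Rightarrow> bool" where
  "succs_fifo ws \<longleftrightarrow> (\<forall>i j i' d. i < length ws \<longrightarrow> j < length ws \<longrightarrow> is_next (ws ! i) (ws ! j) \<longrightarrow>
      i' < i \<longrightarrow> is_next (ws ! i') d \<longrightarrow> (\<exists>j'<j. ws ! j' = d))"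

definition greedy_inv :: "nat list \<Rightarrow> bool" where
  "greedy_inv ws \<longleftrightarrow> distinct ws \<and> set ws \<subseteq> N \<and> (\<forall>a\<in>set ws. f a \<le> length ws) \<and>
    (\<forall>q\<in>f ` N. q \<le> length ws \<longrightarrow> ws ! (q - 1) = fiber_min n f q) \<and>
    preds_before ws \<and> succs_fifo ws"

text \<open>This is where the parking condition enters: among the at least \<open>p + 1\<close> elements with value
  at most \<open>p + 1\<close>, one is not yet placed, and the least such one in its fibre is the successor of
  a placed element.\<close>
lemma exists_waiting:
  assumes I: "greedy_inv ws" and len: "length ws < n" and nh: "Suc (length ws) \<notin> f ` N"
  shows "\<exists>i. waiting n f ws i"
proof -
  let ?p = "length ws"
  have "\<not> {a \<in> N. f a \<le> Suc ?p} \<subseteq> set ws"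
  proof
    assume "{a \<in> N. f a \<le> Suc ?p} \<subseteq> set ws"
    then have "card {a \<in> N. f a \<le> Suc ?p} \<le> card (set ws)" by (intro card_mono) auto
    also have "\<dots> = ?p" using I distinct_card unfolding greedy_inv_def by blast
    finally show False using parking_card[of "Suc ?p"] len by simp
  qed
  then obtain a where a: "a \<in> N" "f a \<le> Suc ?p" "a \<notin> set ws" by blast
  have "f a \<noteq> Suc ?p" using nh a(1) by (metis imageI)
  then have fa: "f a \<le> ?p" "f a \<in> f ` N" using a by auto
  define a' where "a' = (LEAST e. e \<in> N \<and> f e = f a \<and> e \<notin> set ws)"
  have "a' \<in> N \<and> f a' = f a \<and> a' \<notin> set ws" unfolding a'_def
    by (rule LeastI[of _ a]) (use a in auto)
  then have a': "a' \<in> N" "f a' = f a" "a' \<notin> set ws" by auto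
  have a'_min: "\<And>e. e \<in> N \<Longrightarrow> f e = f a \<Longrightarrow> e \<notin> set ws \<Longrightarrow> a' \<le> e"
    unfolding a'_def by (rule Least_le) auto
  have "1 \<le> f a" using f_in a by auto
  then have "ws ! (f a - 1) = fiber_min n f (f a)" "f a - 1 < ?p"
    using I fa unfolding greedy_inv_def by auto
  then have "fiber_min n f (f a') \<in> set ws" using a'(2) by (metis nth_mem)
  then obtain c where c: "is_next c a'" using fiber_min_or_is_next[OF a'(1)] a'(3) by metis
  then have "c \<in> set ws" using a'_min[of c] is_next_D[OF c] a' by fastforce
  then obtain i where "i < ?p" "ws ! i = c" by (metis in_set_conv_nth)
  then have "waiting n f ws i" unfolding waiting_def using c a' by auto
  then show ?thesis by blast
qed

lemma greedy_next_props:
  assumes I: "greedy_inv ws" and len: "length ws < n"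
  defines "e \<equiv> greedy_next n f ws"
  shows "e \<in> N \<and> e \<notin> set ws \<and> f e \<le> Suc (length ws) \<and>
    (Suc (length ws) \<in> f ` N \<longrightarrow> e = fiber_min n f (Suc (length ws))) \<and>
    (\<forall>c. is_next c e \<longrightarrow> (\<exists>i<length ws. ws ! i = c \<and> (\<forall>i'<i. \<not> waiting n f ws i')))"
proof (cases "Suc (length ws) \<in> f ` N")
  case True
  then have e: "e = fiber_min n f (Suc (length ws))" unfolding e_def greedy_next_def by simp
  have "e \<notin> set ws" using I fiber_min_in[OF True] unfolding e greedy_inv_def by force
  then show ?thesis using e fiber_min_in[OF True] not_is_next_fiber_min[OF True] by auto
next
  case False
  define i where "i = (LEAST i. waiting n f ws i)"
  have "waiting n f ws i" unfolding i_def using exists_waiting[OF I len False] by (rule LeastI_ex)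
  then obtain d where d: "is_next (ws ! i) d" "d \<notin> set ws" "i < length ws"
    unfolding waiting_def by blast
  have first: "\<And>i'. i' < i \<Longrightarrow> \<not> waiting n f ws i'" unfolding i_def by (rule not_less_Least)
  have e: "e = d" using False fiber_succ_eq[OF d(1)] unfolding e_def greedy_next_def i_def by simp
  have "f (ws ! i) \<le> length ws" using I d(3) unfolding greedy_inv_def by auto
  moreover have "\<exists>i'<length ws. ws ! i' = c \<and> (\<forall>i''<i'. \<not> waiting n f ws i'')"
    if "is_next c e" for c
  proof -
    have "c = ws ! i" using is_next_source_unique[OF _ d(1)] that e by simp
    then show ?thesis using d(3) first by blast
  qed
  ultimately show ?thesis using e d False is_next_D[OF d(1)] by auto
qed

lemma preds_before_snoc:
  assumes I: "greedy_inv ws" and len: "length ws < n"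
  shows "preds_before (ws @ [greedy_next n f ws])"
  unfolding preds_before_def
proof (intro allI impI)
  let ?p = "length ws" and ?ws = "ws @ [greedy_next n f ws]"
  fix j c assume j: "j < length ?ws" and c: "is_next c (?ws ! j)"
  show "\<exists>i<j. ?ws ! i = c"
  proof (cases "j = ?p")
    case True
    then have "is_next c (greedy_next n f ws)" using c by simp
    then obtain i where "i < ?p" "ws ! i = c" using greedy_next_props[OF I len] by blast
    then show ?thesis using True nth_append_left[of i ws] by metis
  next
    case False
    then have jp: "j < ?p" using j by simp
    then have "is_next c (ws ! j)" using c by (simp add: nth_append)
    then obtain i where "i < j" "ws ! i = c"
      using I jp unfolding greedy_inv_def preds_before_def by blast
    then show ?thesis using jp nth_append_left[of i ws] by (metis order.strict_trans)
  qed
qed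

lemma succs_fifo_snoc:
  assumes I: "greedy_inv ws" and len: "length ws < n"
  shows "succs_fifo (ws @ [greedy_next n f ws])"
  unfolding succs_fifo_def
proof (intro allI impI)
  define e where "e = greedy_next n f ws"
  let ?p = "length ws" and ?ws = "ws @ [e]"
  have first: "\<And>c. is_next c e \<Longrightarrow> \<exists>i<?p. ws ! i = c \<and> (\<forall>i'<i. \<not> waiting n f ws i')"
    using greedy_next_props[OF I len] unfolding e_def by auto
  have nth_old: "\<And>i. i < ?p \<Longrightarrow> ?ws ! i = ws ! i" by (simp add: nth_append)
  fix i j i' d assume i: "i < length ?ws" and j: "j < length ?ws"
    and ij: "is_next (?ws ! i) (?ws ! j)" and i'i: "i' < i" and d: "is_next (?ws ! i') d"
  obtain i2 where i2: "i2 < j" "?ws ! i2 = ?ws ! i"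
    using preds_before_snoc[OF I len] ij j unfolding preds_before_def e_def by blast
  moreover have "distinct ?ws" using I greedy_next_props[OF I len] unfolding greedy_inv_def e_def
    by simp
  ultimately have "i < j" using i j by (simp add: nth_eq_iff_index_eq)
  then have ip: "i < ?p" "i' < ?p" using j i'i by auto
  show "\<exists>j'<j. ?ws ! j' = d"
  proof (cases "j = ?p")
    case True
    then have "is_next (ws ! i) e" using ij nth_old ip by simp
    then obtain i1 where i1: "i1 < ?p" "ws ! i1 = ws ! i" "\<forall>i'<i1. \<not> waiting n f ws i'"
      using first by blast
    then have "i1 = i" using I ip unfolding greedy_inv_def by (simp add: nth_eq_iff_index_eq)
    then have "d \<in> set ws" using i1 i'i d nth_old ip unfolding waiting_def by auto
    then obtain j' where "j' < ?p" "ws ! j' = d" by (auto simp: in_set_conv_nth)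
    then show ?thesis using True nth_old by auto
  next
    case False
    then have jp: "j < ?p" using j by simp
    then have "is_next (ws ! i) (ws ! j)" "is_next (ws ! i') d" using ij d nth_old ip by auto
    then obtain j' where "j' < j" "ws ! j' = d"
      using I ip jp i'i unfolding greedy_inv_def succs_fifo_def by blast
    then show ?thesis using nth_old jp by auto
  qed
qed

lemma greedy_inv_snoc:
  assumes I: "greedy_inv ws" and len: "length ws < n"
  shows "greedy_inv (ws @ [greedy_next n f ws])"
proof -
  define e where "e = greedy_next n f ws"
  let ?p = "length ws" and ?ws = "ws @ [e]"
  have E: "e \<in> N" "e \<notin> set ws" "f e \<le> Suc ?p" "Suc ?p \<in> f ` N \<Longrightarrow> e = fiber_min n f (Suc ?p)"
    using greedy_next_props[OF I len] unfolding e_def by auto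
  have "\<forall>q\<in>f ` N. q \<le> length ?ws \<longrightarrow> ?ws ! (q - 1) = fiber_min n f q"
  proof (intro ballI impI)
    fix q assume q: "q \<in> f ` N" "q \<le> length ?ws"
    then have "1 \<le> q" using f_in by auto
    show "?ws ! (q - 1) = fiber_min n f q"
    proof (cases "q = Suc ?p")
      case True
      then show ?thesis using E(4) q by simp
    next
      case False
      then show ?thesis using I q \<open>1 \<le> q\<close> unfolding greedy_inv_def by (auto simp: nth_append)
    qed
  qed
  then show ?thesis
    using I E preds_before_snoc[OF I len] succs_fifo_snoc[OF I len]
    unfolding greedy_inv_def e_def by auto
qed

lemma greedy_inv_greedy_word: "p \<le> n \<Longrightarrow> greedy_inv (greedy_word n f p)"
proof (induction p)
  case 0
  have "0 \<notin> f ` N" using f_in by force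
  then show ?case by (simp add: greedy_inv_def preds_before_def succs_fifo_def)
next
  case (Suc p)
  then show ?case using greedy_inv_snoc[of "greedy_word n f p"] by simp
qed

abbreviation "word \<equiv> greedy_word n f n"

lemma greedy_inv_word: "greedy_inv word"
  by (rule greedy_inv_greedy_word) simp

lemma set_word: "distinct word" "set word = N"
proof -
  show "distinct word" using greedy_inv_word unfolding greedy_inv_def by blast
  then have "card (set word) = card N" by (simp add: distinct_card)
  moreover have "set word \<subseteq> N" using greedy_inv_word unfolding greedy_inv_def by blast
  ultimately show "set word = N" by (simp add: card_subset_eq)
qed

definition word_pos :: "nat \<Rightarrow> nat" where
  "word_pos a = Suc (THE i. i < n \<and> word ! i = a)"

lemma word_pos_nth: assumes i: "i < n" shows "word_pos (word ! i) = Suc i"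
proof -
  have "(THE j. j < n \<and> word ! j = word ! i) = i"
    by (rule the_equality) (use i set_word(1) in \<open>auto simp: nth_eq_iff_index_eq\<close>)
  then show ?thesis unfolding word_pos_def by simp
qed

lemma nth_word_pos: assumes a: "a \<in> N" shows "word_pos a \<in> N" "word ! (word_pos a - 1) = a"
proof -
  obtain i where "i < n" "word ! i = a" using a set_word(2)
    by (metis in_set_conv_nth length_greedy_word)
  then show "word_pos a \<in> N" "word ! (word_pos a - 1) = a" using word_pos_nth by auto
qed

lemma bij_word_pos: "bij_betw word_pos N N"
proof (rule bij_betw_byWitness[where f' = "\<lambda>q. word ! (q - 1)"])
  show "\<forall>q\<in>N. word_pos (word ! (q - 1)) = q" using word_pos_nth by auto
  show "(\<lambda>q. word ! (q - 1)) ` N \<subseteq> N"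
  proof (rule image_subsetI)
    fix q assume "q \<in> N"
    then have "word ! (q - 1) \<in> set word" by (intro nth_mem) auto
    then show "word ! (q - 1) \<in> N" using set_word(2) by simp
  qed
qed (use nth_word_pos in auto)

lemma word_pos_fiber_min: assumes q: "q \<in> f ` N" shows "word_pos (fiber_min n f q) = q"
proof -
  have "1 \<le> q" "q \<le> n" using q f_in by auto
  then have "word ! (q - 1) = fiber_min n f q" using greedy_inv_word q unfolding greedy_inv_def
    by auto
  then show ?thesis using word_pos_nth[of "q - 1"] \<open>1 \<le> q\<close> \<open>q \<le> n\<close> by simp
qed

lemma word_pos_is_next: assumes cd: "is_next c d" shows "word_pos c < word_pos d"
proof -
  have "d \<in> N" using is_next_D[OF cd] by auto
  then have d: "word_pos d - 1 < n" "word ! (word_pos d - 1) = d" using nth_word_pos[OF \<open>d \<in> N\<close>]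
    by auto
  moreover have "\<forall>j<n. \<forall>c. is_next c (word ! j) \<longrightarrow> (\<exists>i<j. word ! i = c)"
    using greedy_inv_word unfolding greedy_inv_def preds_before_def by simp
  ultimately obtain i where "i < word_pos d - 1" "word ! i = c" using cd by metis
  then show ?thesis using word_pos_nth[of i] d by simp
qed

lemma word_pos_fifo:
  assumes cd: "is_next c d" and cd': "is_next c' d'" and less: "word_pos c' < word_pos c"
  shows "word_pos d' < word_pos d"
proof -
  have N: "c \<in> N" "d \<in> N" "c' \<in> N" using is_next_D cd cd' by auto
  have ix: "word_pos c - 1 < n" "word ! (word_pos c - 1) = c" "word_pos d - 1 < n"
    "word ! (word_pos d - 1) = d"
    "word ! (word_pos c' - 1) = c'" "word_pos c' - 1 < word_pos c - 1"
    using nth_word_pos[OF N(1)] nth_word_pos[OF N(2)] nth_word_pos[OF N(3)] less by auto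
  then obtain j where "j < word_pos d - 1" "word ! j = d'"
    using greedy_inv_word cd cd' unfolding greedy_inv_def succs_fifo_def
    by (metis length_greedy_word)
  then show ?thesis using word_pos_nth[of j] ix by simp
qed

text \<open>The coordinates at positions \<open>p < q\<close> are to differ by more than \<open>1\<close> exactly when
  \<open>q \<ge> reach p\<close>.\<close>
definition reach :: "nat \<Rightarrow> nat" where
  "reach p = Min (insert (Suc n) {word_pos d | c d. is_next c d \<and> p \<le> word_pos c})"

lemma finite_reach_set: "finite {word_pos d | c d. is_next c d \<and> p \<le> word_pos c}"
  by (rule finite_subset[of _ "word_pos ` N"]) (auto dest: is_next_D)

lemma reach_le_iff: "q \<le> n \<Longrightarrow> reach p \<le> q \<longleftrightarrow> (\<exists>c d. is_next c d \<and> p \<le> word_pos c \<and> word_pos d \<le> q)"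
  unfolding reach_def using finite_reach_set by (auto simp: Min_le_iff)

lemma reach_mono: assumes "p \<le> q" shows "reach p \<le> reach q"
proof -
  have "{word_pos d | c d. is_next c d \<and> q \<le> word_pos c}
    \<subseteq> {word_pos d | c d. is_next c d \<and> p \<le> word_pos c}"
    using assms by fastforce
  then show ?thesis unfolding reach_def
    by (intro Min_antimono insert_mono) (use finite_reach_set in auto)
qed

definition coords :: "nat \<Rightarrow> real" where
  "coords = (SOME X. realises_thresholds n reach 1 X)"

lemma realises_thresholds_coords: "realises_thresholds n reach 1 coords"
proof -
  have "\<exists>X. realises_thresholds n reach 1 X" by (rule realises_thresholds_exists) (rule reach_mono)
  then show ?thesis unfolding coords_def by (rule someI_ex)
qed

definition point :: "nat \<Rightarrow> real" where
  "point a = (if a \<in> N then coords (word_pos a) else 0)"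

lemma point_gap:
  assumes a: "a \<in> N" and b: "b \<in> N" and less: "word_pos a < word_pos b"
  shows "point b < point a \<and> point a - point b \<noteq> 1 \<and>
    (1 < point a - point b \<longleftrightarrow>
      (\<exists>c d. is_next c d \<and> word_pos a \<le> word_pos c \<and> word_pos d \<le> word_pos b))"
proof -
  have "1 \<le> word_pos a" "word_pos b \<le> n" using nth_word_pos a b by auto
  then have "coords (word_pos b) < coords (word_pos a) \<and>
      (reach (word_pos a) \<le> word_pos b \<longrightarrow> 1 < coords (word_pos a) - coords (word_pos b)) \<and>
      (word_pos b < reach (word_pos a) \<longrightarrow> coords (word_pos a) - coords (word_pos b) < 1)"
    using realises_thresholds_coords less unfolding realises_thresholds_def by blast
  then show ?thesis
    using a b reach_le_iff[OF \<open>word_pos b \<le> n\<close>, of "word_pos a"] unfolding point_def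
    by (cases "reach (word_pos a) \<le> word_pos b") auto
qed

lemma word_pos_inj: "a \<in> N \<Longrightarrow> b \<in> N \<Longrightarrow> word_pos a = word_pos b \<Longrightarrow> a = b"
  using nth_word_pos(2) by metis

lemma point_less_iff:
  assumes a: "a \<in> N" and b: "b \<in> N"
  shows "point b < point a \<longleftrightarrow> word_pos a < word_pos b"
proof -
  consider "word_pos a < word_pos b" | "word_pos a = word_pos b" | "word_pos b < word_pos a"
    by linarith
  then show ?thesis
  proof cases
    case 2
    then show ?thesis using word_pos_inj a b by auto
  next
    case 3
    then show ?thesis using point_gap[OF b a] by auto
  qed (use point_gap[OF a b] in auto)
qed

lemma point_in_complement: "point \<in> shi_complement n"
proof -
  have "point i - point j \<noteq> 0 \<and> point i - point j \<noteq> 1" if ij: "1 \<le> i" "i < j" "j \<le> n" for i j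
  proof -
    have N: "i \<in> N" "j \<in> N" using ij by auto
    then have "word_pos i \<noteq> word_pos j" using word_pos_inj ij by blast
    then consider "word_pos i < word_pos j" | "word_pos j < word_pos i" by linarith
    then show ?thesis by cases (use point_gap[OF N] point_gap[OF N(2) N(1)] in auto)
  qed
  moreover have "point i = 0" if "i \<notin> N" for i using that unfolding point_def by argo
  ultimately show ?thesis unfolding shi_complement_def by blast
qed

lemma shi_pos_point: assumes a: "a \<in> N" shows "shi_pos n point a = word_pos a"
proof -
  have "{k \<in> N. point a < point k} = {k \<in> N. word_pos k \<le> word_pos a - 1}"
    using point_less_iff[OF _ a] nth_word_pos(1)[OF a] by fastforce
  moreover have "card {k \<in> N. word_pos k \<le> word_pos a - 1} = word_pos a - 1"
    using nth_word_pos(1)[OF a] by (intro card_bij_betw_atMost[OF bij_word_pos]) auto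
  ultimately show ?thesis unfolding shi_pos_def using nth_word_pos(1)[OF a] by simp
qed

lemma shi_arc_point:
  "shi_arc n point i l \<longleftrightarrow>
    i \<in> N \<and> l \<in> N \<and> i < l \<and> (\<exists>c d. is_next c d \<and> word_pos i \<le> word_pos c \<and> word_pos d \<le> word_pos l)"
proof
  assume arc: "shi_arc n point i l"
  then have N: "i \<in> N" "l \<in> N" "i < l" and gap: "1 < point i - point l"
    unfolding shi_arc_def by auto
  have "word_pos i < word_pos l"
    using gap point_less_iff[OF N(1,2)] by simp
  then show "i \<in> N \<and> l \<in> N \<and> i < l
    \<and> (\<exists>c d. is_next c d \<and> word_pos i \<le> word_pos c \<and> word_pos d \<le> word_pos l)"
    using point_gap[OF N(1,2)] gap N by blast
next
  assume "i \<in> N \<and> l \<in> N \<and> i < l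
    \<and> (\<exists>c d. is_next c d \<and> word_pos i \<le> word_pos c \<and> word_pos d \<le> word_pos l)"
  then obtain c d where N: "i \<in> N" "l \<in> N" "i < l"
    and cd: "is_next c d" "word_pos i \<le> word_pos c" "word_pos d \<le> word_pos l" by blast
  then have "word_pos i < word_pos l" using word_pos_is_next[OF cd(1)] by simp
  then have "1 < point i - point l" using point_gap[OF N(1,2)] cd by blast
  then show "shi_arc n point i l" using N unfolding shi_arc_def by auto
qed

lemma shi_min_arc_point_if_is_next:
  assumes cd: "is_next c d"
  shows "shi_min_arc n point c d"
proof -
  have N: "c \<in> N" "d \<in> N" "c < d" using is_next_D[OF cd] by auto
  have "\<not> (shi_arc n point j k \<and> (j, k) \<noteq> (c, d) \<and>
      shi_pos n point c \<le> shi_pos n point j \<and> shi_pos n point k \<le> shi_pos n point d)" for j k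
  proof
    assume jk: "shi_arc n point j k \<and> (j, k) \<noteq> (c, d) \<and>
      shi_pos n point c \<le> shi_pos n point j \<and> shi_pos n point k \<le> shi_pos n point d"
    then obtain c' d' where jkN: "j \<in> N" "k \<in> N" and c'd': "is_next c' d'"
      "word_pos j \<le> word_pos c'" "word_pos d' \<le> word_pos k"
      unfolding shi_arc_point by blast
    have le: "word_pos c \<le> word_pos j" "word_pos k \<le> word_pos d" using jk shi_pos_point N jkN
      by auto
    show False
    proof (cases "c' = c")
      case True
      then have "d' = d" using is_next_target_unique cd c'd'(1) by blast
      then have "word_pos j = word_pos c" "word_pos k = word_pos d" using le c'd' True by auto
      then show False using word_pos_inj jkN N jk by auto
    next
      case False
      then have "word_pos c < word_pos c'" using le c'd' word_pos_inj is_next_D[OF c'd'(1)] N(1)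
        by fastforce
      then show False using word_pos_fifo[OF c'd'(1) cd] le c'd' by simp
    qed
  qed
  moreover have "shi_arc n point c d" unfolding shi_arc_point using N cd by blast
  ultimately show ?thesis unfolding shi_min_arc_def by blast
qed

lemma shi_min_arc_point: "shi_min_arc n point c d \<longleftrightarrow> is_next c d"
proof
  interpret P: shi_point n point by (rule shi_point.intro[OF point_in_complement])
  assume m: "shi_min_arc n point c d"
  then have N: "c \<in> N" "d \<in> N" using P.min_arc_D by auto
  obtain c' d' where c'd': "is_next c' d'" "word_pos c \<le> word_pos c'" "word_pos d' \<le> word_pos d"
    using P.min_arc_D[OF m] unfolding shi_arc_point by blast
  have "c' \<in> N" "d' \<in> N" using is_next_D[OF c'd'(1)] by auto
  then have "c = c' \<and> d = d'"
    using P.min_arc_not_nested[OF m shi_min_arc_point_if_is_next[OF c'd'(1)]] c'd' shi_pos_point N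
    by simp
  then show "is_next c d" using c'd' by simp
qed (rule shi_min_arc_point_if_is_next)

lemma shi_sigma_at_point: "shi_sigma_at n point = f"
proof
  interpret P: shi_point n point by (rule shi_point.intro[OF point_in_complement])
  fix a
  show "shi_sigma_at n point a = f a"
  proof (cases "a \<in> N")
    case True
    obtain h where h: "P.chain_head h" "P.chain a h" using P.exists_chain_head True by blast
    have "(a, h) \<in> (P.min_arcs \<union> P.min_arcs\<inverse>)\<^sup>*" using h(2) P.chain_iff by blast
    then have "f a = f h"
      by (induction rule: rtrancl_induct) (auto simp: shi_min_arc_point dest: is_next_D)
    moreover have "h = fiber_min n f (f h)"
      using fiber_min_or_is_next[of h] h(1) shi_min_arc_point unfolding P.chain_head_def by auto
    moreover have "h \<in> N" using h(1) unfolding P.chain_head_def by blast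
    ultimately have "word_pos h = f a" using word_pos_fiber_min by (metis imageI)
    then show ?thesis using P.sigma_eq_pos_chain_head[OF True h] shi_pos_point \<open>h \<in> N\<close> by simp
  next
    case False
    then show ?thesis using f_outside by (simp add: shi_sigma_at_def del: atLeastAtMost_iff)
  qed
qed

end

lemma parking_function_attained:
  assumes "f \<in> parking_functions n"
  shows "\<exists>x\<in>shi_complement n. shi_sigma_at n x = f"
proof -
  interpret parking n f by (rule parking.intro[OF assms])
  show ?thesis using point_in_complement shi_sigma_at_point by blast
qed

lemma shi_regions_eq:
  "shi_regions n = connected_component_set (shi_complement n) ` shi_complement n"
  unfolding shi_regions_def by blast

lemma inj_on_shi_sigma: "inj_on (shi_sigma n) (shi_regions n)"
proof (rule inj_onI)
  let ?C = "shi_complement n"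
  fix R R' assume "R \<in> shi_regions n" "R' \<in> shi_regions n" and eq: "shi_sigma n R = shi_sigma n R'"
  then obtain x y where x: "x \<in> ?C" "R = connected_component_set ?C x"
    and y: "y \<in> ?C" "R' = connected_component_set ?C y" unfolding shi_regions_eq by blast
  then have "shi_sigma_at n x = shi_sigma_at n y" using eq shi_sigma_connected_component by simp
  then have "connected_component ?C x y"
    using x y shi_same_side_if_sigma_eq connected_component_if_shi_same_side by blast
  then show "R = R'" using x y by (simp add: connected_component_eq_eq)
qed

lemma shi_sigma_image: "shi_sigma n ` shi_regions n = parking_functions n"
proof -
  have "shi_sigma n ` shi_regions n = shi_sigma_at n ` shi_complement n"
    unfolding shi_regions_eq image_image using shi_sigma_connected_component by simp
  also have "\<dots> = parking_functions n"
    using shi_point.sigma_in_parking_functions[OF shi_point.intro] parking_function_attained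
    by blast
  finally show ?thesis .
qed

theorem theorem2p2:
  fixes n :: nat
  assumes "n \<ge> 1"
  shows "bij_betw (shi_sigma n) (shi_regions n) (parking_functions n)"
  using inj_on_shi_sigma shi_sigma_image unfolding bij_betw_def by blast

end
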